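(* For each $k\in\{1,\dots,n-1\}$, the map $\psi_k:\wedge^kH_1\to V^{\otimes n}$ has image exactly $H_k$ and is an isomorphism of $\mathbb{C}(q)$-vector spaces $\wedge^kH_1\cong H_k$. Moreover \[\{\psi_k(e_{i_1}\wedge e_{i_2}\wedge\cdots\wedge e_{i_k}) : 1\le i_1<i_2<\cdots<i_k\le n-1\}=\phi(\mathcal{S}_k).\]
   Context: Let $U=U_q(\mathfrak{gl}(1|1))$ be the unital superalgebra over $\mathbb{C}(q)$ generated by odd elements $E,F$ and even elements $\mathbf q^h$ ($h\in P^*=\mathbb{Z}h_1\oplus\mathbb{Z}h_2$) with relations $\mathbf q^0=1$, $\mathbf q^h\mathbf q^{h'}=\mathbf q^{h+h'}$, $\mathbf q^hE=q^{\langle h,\alpha\rangle}E\mathbf q^h$, $\mathbf q^hF=q^{-\langle h,\alpha\rangle}F\mathbf q^h$, $EF+FE=\frac{K-K^{-1}}{q-q^{-1}}$ with $K=\mathbf q^{h_1+h_2}$, $E^2=F^2=0$; here $P=\mathbb{Z}\epsilon_1\oplus\mathbb{Z}\epsilon_2$ with $\{\epsilon_1,\epsilon_2\}$ dual to $\{h_1,h_2\}$ and $\alpha=\epsilon_1-\epsilon_2$. Comultiplication: $\Delta(E)=E\otimes K^{-1}+1\otimes E$, $\Delta(F)=F\otimes1+K\otimes F$, $\Delta(\mathbf q^h)=\mathbf q^h\otimes\mathbf q^h$; on tensor products one uses the Koszul sign rule $(X\otimes Y)(a\otimes b)=(-1)^{|Y||a|}Xa\otimes Yb$. $V$ has basis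 $v_0$ (even), $v_1$ (odd) with $Ev_0=0,Ev_1=v_0,Fv_0=v_1,Fv_1=0$, $\mathbf q^hv_0=q^{\langle h,\epsilon_1\rangle}v_0$, $\mathbf q^hv_1=q^{\langle h,\epsilon_2\rangle}v_1$. Fix $n\ge2$; $U$ acts on $V^{\otimes m}$ via iterated comultiplication. For $0\le k\le n-1$, $H_k=\{v\in V^{\otimes n}: Ev=0,\ \mathbf q^hv=q^{\langle h,(n-k)\epsilon_1+k\epsilon_2\rangle}v\ \forall h\in P^*\}$. For $1\le i\le n-1$, $e_i=v_0^{\otimes(i-1)}\otimes(q^{-1}v_0\otimes v_1-v_1\otimes v_0)\otimes v_0^{\otimes(n-1-i)}$; these form a basis of $H_1$. For $1\le i\le n$ let $w_i=v_0^{\otimes(i-1)}\otimes v_1\otimes v_0^{\otimes(n-i)}$ and $U'=\mathrm{span}\{w_i\}$; note $e_i=-w_i+q^{-1}w_{i+1}$, so $H_1\subset U'$. Let $\psi:\wedge^*U'\to V^{\otimes n}$ be the $\mathbb{C}(q)$-linear map with $\psi(w_{i_1}\wedge\cdots\wedge w_{i_k})=v_{\alpha_1}\otimes\cdots\otimes v_{\alpha_n}$ for $i_1<\cdots<i_k$, where $\alpha_j=1$ if $j\in\{i_1,\dots,i_k\}$ and $\alpha_j=0$ otherwise; $\psi_k$ is the restriction of $\psi$ to $\wedge^kH_1$. $\mathcal{S}_k$ is the set of strings $s=(a_1,b_1,a_2,b_2,\dots,b_l,a_{l+1})$ ($l\ge0$) of nonnegative integers with all $b_i\ge2$, $\sum_{i=1}^l(b_i-1)=k$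 and $\sum_{i=1}^{l+1}a_i+\sum_{i=1}^lb_i=n$; and $\phi(s)=v_0^{\otimes a_1}\otimes E(v_1^{\otimes b_1})\otimes v_0^{\otimes a_2}\otimes\cdots\otimes E(v_1^{\otimes b_l})\otimes v_0^{\otimes a_{l+1}}\in V^{\otimes n}$, where $E(v_1^{\otimes b})$ is computed in $V^{\otimes b}$ and factors $v_0^{\otimes 0}$ are omitted. *)

theory Defs
  imports Main "HOL-Library.Function_Algebras" "HOL-Computational_Algebra.Polynomial"
    "HOL-Computational_Algebra.Fraction_Field" "HOL-Combinatorics.Permutations"
begin

type_synonym K = "complex poly fract"

definition q :: K where "q = Fract [:0, 1:] 1"

text \<open>A basis vector
  v_{alpha_1} tensor ... tensor v_{alpha_n} is indexed by the set S = {j. alpha_j = 1}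
  of positions (1-based) carrying v_1.\<close>
type_synonym tvec = "nat set \<Rightarrow> K"

definition scl :: "K \<Rightarrow> ('a \<Rightarrow> K) \<Rightarrow> ('a \<Rightarrow> K)" where
  "scl c v = (\<lambda>x. c * v x)"

abbreviation kspan :: "('a \<Rightarrow> K) set \<Rightarrow> ('a \<Rightarrow> K) set" where
  "kspan \<equiv> module.span scl"

abbreviation kdependent :: "('a \<Rightarrow> K) set \<Rightarrow> bool" where
  "kdependent \<equiv> module.dependent scl"

definition Vn :: "nat \<Rightarrow> tvec set" where
  "Vn n = {v. \<forall>S. v S \<noteq> 0 \<longrightarrow> S \<subseteq> {1..n}}"

definition bv :: "nat set \<Rightarrow> tvec" where
  "bv S = (\<lambda>T. if T = S then 1 else 0)"

text \<open>Action of E on V^{tensor n} via the iterated coproduct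
  sum_j 1^{(j-1)} tensor E tensor (K^{-1})^{(n-j)} with Koszul signs; K acts by q on V.\<close>
definition E_op :: "nat \<Rightarrow> tvec \<Rightarrow> tvec" where
  "E_op n v = (\<lambda>T. \<Sum>j\<in>{1..n} - T.
      (-1) ^ card {i\<in>T. i < j} * inverse q ^ (n - j) * v (insert j T))"

text \<open>Action of q^h, h = a h_1 + b h_2, on V^{tensor n}.\<close>
definition Kh :: "nat \<Rightarrow> int \<Rightarrow> int \<Rightarrow> tvec \<Rightarrow> tvec" where
  "Kh n a b v = (\<lambda>T. q powi (a * (int n - int (card T)) + b * int (card T)) * v T)"

definition H :: "nat \<Rightarrow> nat \<Rightarrow> tvec set" where
  "H n k = {v \<in> Vn n. E_op n v = 0 \<and>
      (\<forall>a b. Kh n a b v = scl (q powi (a * (int n - int k) + b * int k)) v)}"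

definition w :: "nat \<Rightarrow> tvec" where
  "w i = bv {i}"

definition e :: "nat \<Rightarrow> tvec" where
  "e i = (\<lambda>T. - w i T + inverse q * w (i + 1) T)"

text \<open>Exterior powers of U' = span{w_i}: an element of the k-th exterior power is given by its
  coordinates in the basis w_{i_1} wedge ... wedge w_{i_k} (i_1 < ... < i_k), indexed by the
  strictly increasing list [i_1,...,i_k].  The wedge of u_1,...,u_k (elements of U',
  coordinate of u at w_j being u {j}) has coordinates given by the k x k minors.\<close>
definition wedge :: "tvec list \<Rightarrow> (nat list \<Rightarrow> K)" where
  "wedge us = (\<lambda>J. if sorted_wrt (<) J \<and> length J = length us then
      (\<Sum>p\<in>{p. p permutes {..<length us}}.
          of_int (sign p) * (\<Prod>a<length us. (us ! a) {J ! p a}))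
    else 0)"

definition ext_pow :: "nat \<Rightarrow> tvec set \<Rightarrow> (nat list \<Rightarrow> K) set" where
  "ext_pow k W = kspan {wedge us | us. length us = k \<and> set us \<subseteq> W}"

definition psi :: "(nat list \<Rightarrow> K) \<Rightarrow> tvec" where
  "psi x = (\<lambda>T. if finite T then x (sorted_list_of_set T) else 0)"

definition tensor :: "nat \<Rightarrow> tvec \<Rightarrow> tvec \<Rightarrow> tvec" where
  "tensor m x y = (\<lambda>S. x {i\<in>S. i \<le> m} * y ((\<lambda>i. i - m) ` {i\<in>S. m < i}))"

text \<open>Strings s = (a_1,b_1,...,b_l,a_{l+1}) are lists of odd length; the b's sit at odd
  (0-based) indices.\<close>
definition S_str :: "nat \<Rightarrow> nat \<Rightarrow> nat list set" where
  "S_str n k = {s. odd (length s) \<and> (\<forall>i<length s. odd i \<longrightarrow> s ! i \<ge> 2)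
      \<and> (\<Sum>i\<in>{i. i < length s \<and> odd i}. s ! i - 1) = k \<and> sum_list s = n}"

fun phi_aux :: "bool \<Rightarrow> nat list \<Rightarrow> tvec" where
  "phi_aux _ [] = bv {}"
| "phi_aux True (a # r) = tensor a (bv {}) (phi_aux False r)"
| "phi_aux False (b # r) = tensor b (E_op b (bv {1..b})) (phi_aux True r)"

definition phi :: "nat list \<Rightarrow> tvec" where
  "phi s = phi_aux True s"

end

theory Submission
  imports Defs "Jordan_Normal_Form.Determinant" "Jordan_Normal_Form.Column_Operations"
begin

(* Since q is not a root of unity, H_k consists of the vectors of V^{tensor n} that are supported
   on k-subsets of {1..n} and killed by E.  The coordinates of a wedge are k x k minors.  Hence
   psi(u_1 ^ ... ^ u_k) with u_i in H_1 is killed by E: expanding the minor along the inserted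
   column, E u = 0 says exactly that the coordinates of u sum to zero with weights q^(j-n).
   Conversely E v = 0 determines v on the sets containing n from its values on subsets of
   {1..n-1}, on which the wedges of the basis w_i - q^(i-n) w_n of H_1 have dual coordinates;
   so psi is onto H_k, and it is injective because it only relabels coordinates.
   Since e_i lives on the positions i and i+1, the coordinate matrix of e_{i_1},...,e_{i_k} is a
   staircase and only the diagonal term of each minor survives.  This makes the wedges of the
   e_i triangular with respect to the sum of the index set, hence independent, and it factorises
   psi(e_I) along the maximal runs of consecutive elements of I into the blocks E(v_1^{tensor b})
   of phi. *)

interpretation Kmod: Modules.module "scl :: K \<Rightarrow> ('a \<Rightarrow> K) \<Rightarrow> ('a \<Rightarrow> K)"
  by unfold_locales (auto simp: scl_def fun_eq_iff algebra_simps)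

interpretation psi_hom: module_hom "scl :: K \<Rightarrow> (nat list \<Rightarrow> K) \<Rightarrow> _" "scl :: K \<Rightarrow> tvec \<Rightarrow> _" psi
  by unfold_locales (simp_all add: psi_def scl_def fun_eq_iff)

lemma sum_apply: "(sum f A) x = (\<Sum>a\<in>A. f a x)"
  by (induction A rule: infinite_finite_induct) auto

lemma sorted_list_of_set_set_strict: "sorted_wrt (<) xs \<Longrightarrow> sorted_list_of_set (set xs) = xs"
  by (simp add: strict_sorted_iff sorted_list_of_set.idem_if_sorted_distinct)

section \<open>Weight spaces\<close>

lemma q_nonzero [simp]: "q \<noteq> 0"
  by (simp add: q_def Zero_fract_def eq_fract)

lemma q_power_eq_1D: "q ^ m = 1 \<Longrightarrow> m = 0"
proof -
  assume eq: "q ^ m = 1"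
  have "q ^ j = Fract ([:0, 1:] ^ j) (1 :: complex poly)" for j
    by (induction j) (simp_all add: q_def One_fract_def)
  with eq have "([:0, 1:] ^ m :: complex poly) = 1"
    by (simp add: One_fract_def eq_fract)
  then have "degree ([:0, 1:] ^ m :: complex poly) = 0" by simp
  then show "m = 0" by (simp add: degree_power_eq)
qed

lemma q_powi_inject: "q powi x = q powi y \<longleftrightarrow> x = y"
proof -
  have "x = y" if eq: "q powi x = q powi y" and le: "x \<le> y" for x y :: int
  proof -
    have "q powi y = q powi x * q powi (y - x)"
      by (simp add: power_int_add[symmetric])
    also have "q powi (y - x) = q ^ nat (y - x)"
      using le by (simp add: power_int_def)
    finally have "q ^ nat (y - x) = 1"
      using eq by (simp add: power_int_eq_0_iff)
    with le show ?thesis by (auto dest: q_power_eq_1D)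
  qed
  then show ?thesis by (metis linorder_le_cases)
qed

lemma mem_H_iff: "v \<in> H n k \<longleftrightarrow> v \<in> Vn n \<and> E_op n v = 0 \<and> (\<forall>T. v T \<noteq> 0 \<longrightarrow> card T = k)"
proof
  assume v: "v \<in> H n k"
  have "card T = k" if "v T \<noteq> 0" for T
  proof -
    from v have "Kh n 1 0 v T = scl (q powi (1 * (int n - int k) + 0 * int k)) v T"
      unfolding H_def by auto
    with that have "q powi (int n - int (card T)) = q powi (int n - int k)"
      by (simp add: Kh_def scl_def)
    then show ?thesis by (simp add: q_powi_inject)
  qed
  with v show "v \<in> Vn n \<and> E_op n v = 0 \<and> (\<forall>T. v T \<noteq> 0 \<longrightarrow> card T = k)"
    unfolding H_def by auto
next
  assume v: "v \<in> Vn n \<and> E_op n v = 0 \<and> (\<forall>T. v T \<noteq> 0 \<longrightarrow> card T = k)"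
  then have "Kh n a b v = scl (q powi (a * (int n - int k) + b * int k)) v" for a b
    by (auto simp: Kh_def scl_def fun_eq_iff)
  with v show "v \<in> H n k" unfolding H_def by auto
qed

lemma subspace_H: "Kmod.subspace (H n k)"
  unfolding Kmod.subspace_def
proof (intro conjI ballI allI)
  show "0 \<in> H n k" by (simp add: mem_H_iff Vn_def E_op_def fun_eq_iff)
next
  fix u v assume u: "u \<in> H n k" and v: "v \<in> H n k"
  have support: "\<forall>S. (u + v) S \<noteq> 0 \<longrightarrow> P S"
    if "\<forall>S. u S \<noteq> 0 \<longrightarrow> P S" "\<forall>S. v S \<noteq> 0 \<longrightarrow> P S" for P
    using that by (metis add.right_neutral plus_fun_apply)
  have "E_op n (u + v) = E_op n u + E_op n v"
    by (simp add: E_op_def fun_eq_iff sum.distrib algebra_simps)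
  with u v have "E_op n (u + v) = 0" by (simp add: mem_H_iff)
  moreover have "u + v \<in> Vn n"
    using u v support[of "\<lambda>S. S \<subseteq> {1..n}"] by (simp add: mem_H_iff Vn_def)
  moreover have "\<forall>T. (u + v) T \<noteq> 0 \<longrightarrow> card T = k"
    using u v support[of "\<lambda>T. card T = k"] by (simp add: mem_H_iff)
  ultimately show "u + v \<in> H n k" by (simp add: mem_H_iff)
next
  fix c u assume u: "u \<in> H n k"
  have "E_op n (scl c u) = scl c (E_op n u)"
    by (simp add: E_op_def scl_def fun_eq_iff sum_distrib_left algebra_simps)
  with u show "scl c u \<in> H n k"
    unfolding mem_H_iff Vn_def by (auto simp: scl_def)
qed

lemma H1_weighted_coord_sum:
  assumes "u \<in> H n 1"
  shows "(\<Sum>j\<in>{1..n}. inverse q ^ (n - j) * u {j}) = 0"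
proof -
  from assms have "E_op n u {} = 0" by (simp add: mem_H_iff)
  then show ?thesis by (simp add: E_op_def)
qed

lemma E_op_kernel_eq_0_if_zero_without_n:
  assumes n: "1 \<le> n" and E: "E_op n v = 0" and off: "\<And>S. n \<notin> S \<Longrightarrow> v S = 0"
  shows "v = 0"
proof
  fix S
  show "v S = 0 S"
  proof (cases "n \<in> S")
    case True
    let ?T = "S - {n}"
    let ?f = "\<lambda>j. (-1) ^ card {i\<in>?T. i < j} * inverse q ^ (n - j) * v (insert j ?T)"
    have "0 = E_op n v ?T" using E by simp
    also have "\<dots> = sum ?f {n}"
      unfolding E_op_def by (rule sum.mono_neutral_right) (use n off in auto)
    also have "\<dots> = (-1) ^ card {i\<in>?T. i < n} * v S"
      using True by (simp add: insert_absorb)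
    finally show ?thesis by simp
  qed (simp add: off)
qed

section \<open>Wedges as minors\<close>

lemma wedge_nonzero: "wedge us J \<noteq> 0 \<Longrightarrow> sorted_wrt (<) J \<and> length J = length us"
  by (simp add: wedge_def split: if_splits)

lemma psi_wedge_nonzero: "psi (wedge us) S \<noteq> 0 \<Longrightarrow> finite S \<and> card S = length us"
  by (auto simp: psi_def split: if_splits dest!: wedge_nonzero)

lemma ext_pow_support:
  assumes x: "x \<in> ext_pow k W" and nz: "x J \<noteq> 0"
  shows "sorted_wrt (<) J \<and> length J = k"
proof (rule ccontr)
  assume J: "\<not> (sorted_wrt (<) J \<and> length J = k)"
  from x have "x J = 0" unfolding ext_pow_def
  proof (induction rule: Kmod.span_induct_alt)
    case (step c x y)
    then show ?case using J by (auto simp: scl_def dest: wedge_nonzero)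
  qed simp
  with nz show False by simp
qed

lemma inj_on_psi_ext_pow: "inj_on psi (ext_pow k W)"
  unfolding psi_hom.inj_on_iff_eq_0[OF Kmod.subspace_span[of "{wedge us | us. length us = k \<and> set us \<subseteq> W}"],
      folded ext_pow_def]
proof (intro ballI impI)
  fix x assume x: "x \<in> ext_pow k W" and psi0: "psi x = 0"
  show "x = 0"
  proof
    fix J
    show "x J = 0 J"
    proof (cases "sorted_wrt (<) J")
      case True
      then have "x J = psi x (set J)" by (simp add: psi_def sorted_list_of_set_set_strict)
      with psi0 show ?thesis by simp
    qed (use ext_pow_support[OF x] in auto)
  qed
qed

definition coord_mat :: "tvec list \<Rightarrow> nat list \<Rightarrow> K mat" where
  "coord_mat us J = mat (length us) (length us) (\<lambda>(a, b). (us ! a) {J ! b})"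

lemma coord_mat_carrier: "coord_mat us J \<in> carrier_mat (length us) (length us)"
  by (simp add: coord_mat_def)

lemma det_coord_mat: "det (coord_mat us J) = (\<Sum>p\<in>{p. p permutes {..<length us}}.
      of_int (sign p) * (\<Prod>a<length us. (us ! a) {J ! p a}))"
proof -
  let ?k = "length us"
  have "det (coord_mat us J) =
      (\<Sum>p\<in>{p. p permutes {0..<?k}}. signof p * (\<Prod>a = 0..<?k. coord_mat us J $$ (a, p a)))"
    by (rule det_def'[OF coord_mat_carrier])
  also have "\<dots> = (\<Sum>p\<in>{p. p permutes {..<?k}}. of_int (sign p) * (\<Prod>a<?k. (us ! a) {J ! p a}))"
  proof (rule sum.cong)
    fix p assume "p \<in> {p. p permutes {..<?k}}"
    then have "p a < ?k" if "a < ?k" for a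
      using permutes_in_image that by fastforce
    then show "signof p * (\<Prod>a = 0..<?k. coord_mat us J $$ (a, p a)) =
        of_int (sign p) * (\<Prod>a<?k. (us ! a) {J ! p a})"
      by (simp add: atLeast0LessThan coord_mat_def)
  qed (simp add: atLeast0LessThan)
  finally show ?thesis .
qed

lemma wedge_eq_det: "sorted_wrt (<) J \<Longrightarrow> length J = length us \<Longrightarrow> wedge us J = det (coord_mat us J)"
  by (simp add: wedge_def det_coord_mat)

lemma psi_wedge_eq_det:
  "finite S \<Longrightarrow> card S = length us \<Longrightarrow> psi (wedge us) S = det (coord_mat us (sorted_list_of_set S))"
  by (simp add: psi_def wedge_eq_det)

lemma permutes_strict_mono_eq_id:
  fixes p :: "nat \<Rightarrow> nat"
  assumes p: "p permutes {..<k}" and mono: "\<And>a a'. a < a' \<Longrightarrow> a' < k \<Longrightarrow> p a < p a'"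
  shows "p = id"
proof
  have range: "a < k \<Longrightarrow> p a < k" for a
    using permutes_in_image[OF p, of a] by simp
  have ge: "a < k \<Longrightarrow> a \<le> p a" for a
  proof (induction a)
    case (Suc a)
    then show ?case using mono[of a "Suc a"] by simp
  qed simp
  have le: "d < k \<Longrightarrow> p (k - 1 - d) \<le> k - 1 - d" for d
  proof (induction d)
    case 0
    then show ?case using range[of "k - 1"] by simp
  next
    case (Suc d)
    then have "p (k - 1 - Suc d) < p (k - 1 - d)" using mono[of "k - 1 - Suc d" "k - 1 - d"] by simp
    with Suc show ?case by simp
  qed
  fix a
  show "p a = id a"
  proof (cases "a < k")
    case True
    then show ?thesis using ge[of a] le[of "k - 1 - a"] by simp
  qed (simp add: permutes_not_in[OF p])
qed

lemma permutes_eq_id_if_near_diagonal: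
  fixes p :: "nat \<Rightarrow> nat" and ps J :: "nat list"
  assumes p: "p permutes {..<k}" and "sorted_wrt (<) ps" and J: "sorted_wrt (<) J"
    and "length ps = k" and "length J = k"
    and near: "\<And>a. a < k \<Longrightarrow> ps ! a \<le> J ! p a \<and> J ! p a \<le> ps ! a + 1"
  shows "p = id"
proof (rule permutes_strict_mono_eq_id[OF p])
  fix a a' assume a: "a < a'" "a' < k"
  have "ps ! a < ps ! a'" using assms a by (simp add: sorted_wrt_nth_less)
  with near[of a] near[of a'] a have "J ! p a \<le> J ! p a'" by simp
  moreover have "p a \<noteq> p a'" using permutes_inj[OF p] a by (auto simp: inj_def)
  moreover have "p a < k" "p a' < k" using permutes_in_image[OF p] a by auto
  ultimately show "p a < p a'"
    using J \<open>length J = k\<close> by (metis leD linorder_neqE_nat sorted_wrt_nth_less)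
qed

lemma wedge_eq_diag_prod:
  fixes ps J :: "nat list"
  assumes "sorted_wrt (<) ps" and J: "sorted_wrt (<) J"
    and "length ps = length us" and lJ: "length J = length us"
    and near: "\<And>a b. a < length us \<Longrightarrow> b < length us \<Longrightarrow> (us ! a) {J ! b} \<noteq> 0 \<Longrightarrow>
      ps ! a \<le> J ! b \<and> J ! b \<le> ps ! a + 1"
  shows "wedge us J = (\<Prod>a<length us. (us ! a) {J ! a})"
proof -
  let ?k = "length us"
  let ?f = "\<lambda>p. of_int (sign p) * (\<Prod>a<?k. (us ! a) {J ! p a}) :: K"
  have "?f p = 0" if "p permutes {..<?k}" "p \<noteq> id" for p
  proof (rule ccontr)
    assume "?f p \<noteq> 0"
    then have "(us ! a) {J ! p a} \<noteq> 0" if "a < ?k" for a using that by auto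
    moreover have "p a < ?k" if "a < ?k" for a using that permutes_in_image[OF \<open>p permutes _\<close>] by auto
    ultimately have "p = id"
      using near by (intro permutes_eq_id_if_near_diagonal[OF \<open>p permutes _\<close> assms(1) J assms(3) lJ]) auto
    with \<open>p \<noteq> id\<close> show False ..
  qed
  then have "sum ?f {p. p permutes {..<?k}} = sum ?f {id}"
    by (intro sum.mono_neutral_right) (auto simp: finite_permutations permutes_id)
  then show ?thesis using J lJ by (simp add: wedge_def sign_id)
qed

section \<open>E kills the wedges of H_1\<close>

lemma insort_eq_take_drop:
  fixes ts :: "nat list"
  assumes "sorted ts"
  shows "insort j ts = take (length (filter (\<lambda>x. x < j) ts)) ts @ j # drop (length (filter (\<lambda>x. x < j) ts)) ts"
  using assms
proof (induction ts)
  case (Cons x xs)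
  show ?case
  proof (cases "j \<le> x")
    case True
    with Cons.prems have "filter (\<lambda>y. y < j) (x # xs) = []" by (auto simp: filter_empty_conv)
    with True show ?thesis by simp
  qed (use Cons in simp)
qed simp

lemma sorted_list_of_set_insert_nth:
  fixes T :: "nat set" and j :: nat
  assumes T: "finite T" and j: "j \<notin> T"
  defines "m \<equiv> card {i\<in>T. i < j}"
  defines "L \<equiv> sorted_list_of_set (insert j T)" and "ts \<equiv> sorted_list_of_set T"
  shows "m \<le> card T" and "L ! m = j" and "b < m \<Longrightarrow> L ! b = ts ! b"
    and "m < b \<Longrightarrow> b \<le> card T \<Longrightarrow> L ! b = ts ! (b - 1)"
proof -
  have "length (filter (\<lambda>x. x < j) ts) = card ({x. x < j} \<inter> set ts)"
    by (simp add: ts_def distinct_length_filter)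
  also have "{x. x < j} \<inter> set ts = {i\<in>T. i < j}" using T by (auto simp: ts_def)
  finally have "length (filter (\<lambda>x. x < j) ts) = m" unfolding m_def .
  moreover have "L = insort j ts"
    using sorted_list_of_set_insert_remove[OF T, of j] j by (simp add: L_def ts_def)
  ultimately have L: "L = take m ts @ j # drop m ts"
    using insort_eq_take_drop[of ts j] by (simp add: ts_def)
  show "m \<le> card T" unfolding m_def using T by (intro card_mono) auto
  then have "m \<le> length ts" by (simp add: ts_def)
  then show "L ! m = j" and "b < m \<Longrightarrow> L ! b = ts ! b"
    and "m < b \<Longrightarrow> b \<le> card T \<Longrightarrow> L ! b = ts ! (b - 1)"
    unfolding L by (auto simp: nth_append nth_Cons' ts_def)
qed

lemma det_coord_mat_insert:
  fixes T :: "nat set"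
  assumes T: "finite T" and j: "j \<notin> T" and k: "length us = card T + 1"
  shows "det (coord_mat us (j # sorted_list_of_set T)) =
    (-1) ^ card {i\<in>T. i < j} * det (coord_mat us (sorted_list_of_set (insert j T)))"
proof -
  let ?m = "card {i\<in>T. i < j}"
  let ?A = "coord_mat us (sorted_list_of_set (insert j T))"
  note L = sorted_list_of_set_insert_nth[OF T j]
  have m: "?m < length us" using L(1) k by simp
  have "swap_col_to_front ?A ?m = coord_mat us (j # sorted_list_of_set T)"
    unfolding swap_col_to_front_result[OF coord_mat_carrier m]
    by (rule eq_matI) (use k L in \<open>auto simp: coord_mat_def nth_Cons'\<close>)
  then have "det (coord_mat us (j # sorted_list_of_set T)) = det (swap_col_to_front ?A ?m)" by simp
  also have "\<dots> = (-1) ^ ?m * det ?A" by (rule swap_col_to_front_det[OF coord_mat_carrier m])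
  finally show ?thesis .
qed

lemma det_coord_mat_Cons_mem:
  assumes "j \<in> set ts" and "length us = length ts + 1"
  shows "det (coord_mat us (j # ts)) = 0"
proof -
  obtain c where c: "c < length ts" "ts ! c = j" using assms(1) by (auto simp: in_set_conv_nth)
  show ?thesis
  proof (rule det_identical_columns[OF coord_mat_carrier, of 0 "Suc c"])
    show "col (coord_mat us (j # ts)) 0 = col (coord_mat us (j # ts)) (Suc c)"
      using c assms(2) by (intro eq_vecI) (auto simp: coord_mat_def)
  qed (use c assms(2) in auto)
qed

lemma det_coord_mat_Cons:
  assumes "length us = length ts + 1"
  shows "det (coord_mat us (j # ts)) = (\<Sum>a<length us. (us ! a) {j} * cofactor (coord_mat us (0 # ts)) a 0)"
proof -
  have "det (coord_mat us (j # ts)) =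
      (\<Sum>a<length us. coord_mat us (j # ts) $$ (a, 0) * cofactor (coord_mat us (j # ts)) a 0)"
    by (rule laplace_expansion_column[OF coord_mat_carrier]) (use assms in simp)
  moreover have "mat_delete (coord_mat us (j # ts)) a 0 = mat_delete (coord_mat us (0 # ts)) a 0" for a
    by (rule eq_matI) (auto simp: mat_delete_def coord_mat_def)
  ultimately show ?thesis using assms by (simp add: coord_mat_def cofactor_def)
qed

lemma psi_wedge_insert:
  assumes T: "finite T" and j: "j \<notin> T" and k: "length us = card T + 1"
  shows "(-1) ^ card {i\<in>T. i < j} * psi (wedge us) (insert j T) =
    det (coord_mat us (j # sorted_list_of_set T))"
proof -
  have "psi (wedge us) (insert j T) = det (coord_mat us (sorted_list_of_set (insert j T)))"
    using T j k by (simp add: psi_wedge_eq_det)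
  then show ?thesis using det_coord_mat_insert[OF T j k] by simp
qed

lemma psi_wedge_in_Vn:
  assumes us: "set us \<subseteq> Vn n"
  shows "psi (wedge us) \<in> Vn n"
  unfolding Vn_def
proof (intro CollectI allI impI subsetI)
  fix S t assume nz: "psi (wedge us) S \<noteq> 0" and t: "t \<in> S"
  then have S: "finite S" "card S = length us" by (auto dest: psi_wedge_nonzero)
  let ?T = "S - {t}"
  have "card S > 0" using S t by (auto simp: card_gt_0_iff)
  with S t have k: "length us = card ?T + 1" by (simp add: card_Diff_singleton)
  have "(-1) ^ card {i\<in>?T. i < t} * psi (wedge us) S = det (coord_mat us (t # sorted_list_of_set ?T))"
    using psi_wedge_insert[where j = t, OF _ _ k] S t by (simp add: insert_absorb)
  also have "\<dots> = (\<Sum>a<length us. (us ! a) {t} * cofactor (coord_mat us (0 # sorted_list_of_set ?T)) a 0)"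
    using k by (intro det_coord_mat_Cons) simp
  finally have "(\<Sum>a<length us. (us ! a) {t} * cofactor (coord_mat us (0 # sorted_list_of_set ?T)) a 0) \<noteq> 0"
    using nz by auto
  then obtain a where "a < length us" "(us ! a) {t} \<noteq> 0"
    by (metis (no_types, lifting) lessThan_iff mult_zero_left sum.neutral)
  moreover from this us have "us ! a \<in> Vn n" by auto
  ultimately show "t \<in> {1..n}" by (auto simp: Vn_def)
qed

lemma E_op_psi_wedge_expansion:
  assumes T: "finite T" and k: "length us = card T + 1"
  shows "E_op n (psi (wedge us)) T = (\<Sum>a<length us. cofactor (coord_mat us (0 # sorted_list_of_set T)) a 0 *
    (\<Sum>j\<in>{1..n}. inverse q ^ (n - j) * (us ! a) {j}))"
proof -
  let ?ts = "sorted_list_of_set T"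
  have k': "length us = length ?ts + 1" using T k by simp
  have "E_op n (psi (wedge us)) T = (\<Sum>j\<in>{1..n} - T. inverse q ^ (n - j) * det (coord_mat us (j # ?ts)))"
    unfolding E_op_def
  proof (rule sum.cong)
    fix j assume "j \<in> {1..n} - T"
    with T k have "det (coord_mat us (j # ?ts)) = (-1) ^ card {i\<in>T. i < j} * psi (wedge us) (insert j T)"
      by (intro psi_wedge_insert[symmetric]) auto
    then show "(-1) ^ card {i\<in>T. i < j} * inverse q ^ (n - j) * psi (wedge us) (insert j T) =
        inverse q ^ (n - j) * det (coord_mat us (j # ?ts))"
      by (simp add: algebra_simps)
  qed simp
  also have "\<dots> = (\<Sum>j\<in>{1..n}. inverse q ^ (n - j) * det (coord_mat us (j # ?ts)))"
    using T k' by (intro sum.mono_neutral_left) (auto simp: det_coord_mat_Cons_mem)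
  also have "\<dots> = (\<Sum>a<length us. cofactor (coord_mat us (0 # ?ts)) a 0 *
      (\<Sum>j\<in>{1..n}. inverse q ^ (n - j) * (us ! a) {j}))"
    unfolding det_coord_mat_Cons[OF k'] sum_distrib_left
    by (subst sum.swap) (simp add: algebra_simps)
  finally show ?thesis .
qed

lemma E_op_psi_wedge_H1:
  assumes us: "set us \<subseteq> H n 1"
  shows "E_op n (psi (wedge us)) = 0"
proof
  fix T
  show "E_op n (psi (wedge us)) T = 0 T"
  proof (cases "finite T \<and> length us = card T + 1")
    case False
    then have "psi (wedge us) (insert j T) = 0" if "j \<notin> T" for j
      using that psi_wedge_nonzero[of us "insert j T"] by (force simp: card_insert_if)
    then show ?thesis by (simp add: E_op_def)
  next
    case True
    have "(\<Sum>j\<in>{1..n}. inverse q ^ (n - j) * (us ! a) {j}) = 0" if "a < length us" for a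
      using us that by (intro H1_weighted_coord_sum) auto
    with True show ?thesis by (simp add: E_op_psi_wedge_expansion)
  qed
qed

lemma psi_wedge_H1_in_H:
  assumes us: "set us \<subseteq> H n 1" and k: "length us = k"
  shows "psi (wedge us) \<in> H n k"
proof -
  have "set us \<subseteq> Vn n" using us by (auto simp: mem_H_iff)
  with us k show ?thesis
    by (auto simp: mem_H_iff psi_wedge_in_Vn E_op_psi_wedge_H1 dest: psi_wedge_nonzero)
qed

lemma psi_ext_pow_H1_subset: "psi ` ext_pow k (H n 1) \<subseteq> H n k"
  unfolding ext_pow_def psi_hom.span_image[symmetric]
  by (rule Kmod.span_minimal[OF _ subspace_H]) (blast intro: psi_wedge_H1_in_H)

section \<open>Surjectivity onto H_k\<close>

definition H1_basis :: "nat \<Rightarrow> nat \<Rightarrow> tvec" where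
  "H1_basis n i = (\<lambda>T. w i T - inverse q ^ (n - i) * w n T)"

lemma H1_basis_single: "H1_basis n i {t} = (if t = i then 1 else 0) - (if t = n then inverse q ^ (n - i) else 0)"
  by (simp add: H1_basis_def w_def bv_def)

lemma H1_basis_nonzero: "H1_basis n i S \<noteq> 0 \<Longrightarrow> S = {i} \<or> S = {n}"
  by (auto simp: H1_basis_def w_def bv_def split: if_splits)

lemma H1_basis_in_H1:
  assumes "i \<in> {1..n}"
  shows "H1_basis n i \<in> H n 1"
  unfolding mem_H_iff
proof (intro conjI allI impI)
  show "H1_basis n i \<in> Vn n"
    using assms by (auto simp: Vn_def dest!: H1_basis_nonzero)
  show "card T = 1" if "H1_basis n i T \<noteq> 0" for T
    using H1_basis_nonzero[OF that] by auto
  show "E_op n (H1_basis n i) = 0"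
  proof
    fix T
    show "E_op n (H1_basis n i) T = 0 T"
    proof (cases "T = {}")
      case True
      have "E_op n (H1_basis n i) T = (\<Sum>j\<in>{1..n}. (if j = i then inverse q ^ (n - i) else 0)
          - (if j = n then inverse q ^ (n - i) else 0))"
        unfolding E_op_def True by (intro sum.cong) (auto simp: H1_basis_single)
      then show ?thesis using assms by (simp add: sum_subtractf)
    next
      case False
      then have "H1_basis n i (insert j T) = 0" if "j \<notin> T" for j
        using that by (auto dest!: H1_basis_nonzero)
      then show ?thesis by (simp add: E_op_def)
    qed
  qed
qed

lemma H1_basis_set_in_H1:
  assumes I: "I \<subseteq> {1..n-1}"
  shows "set (map (H1_basis n) (sorted_list_of_set I)) \<subseteq> H n 1"
proof
  fix u assume "u \<in> set (map (H1_basis n) (sorted_list_of_set I))"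
  moreover have "finite I" using I finite_subset by blast
  ultimately obtain i where "i \<in> I" "u = H1_basis n i" by auto
  moreover from subsetD[OF I \<open>i \<in> I\<close>] have "i \<in> {1..n}" by auto
  ultimately show "u \<in> H n 1" by (blast intro: H1_basis_in_H1)
qed

lemma psi_wedge_H1_basis:
  assumes n: "1 \<le> n" and I: "I \<subseteq> {1..n-1}" and J: "J \<subseteq> {1..n-1}" and card: "card J = card I"
  shows "psi (wedge (map (H1_basis n) (sorted_list_of_set I))) J = (if J = I then 1 else 0)"
proof -
  have fin: "finite I" "finite J" using I J finite_subset by auto
  let ?ps = "sorted_list_of_set I" and ?J = "sorted_list_of_set J"
  have J_ne_n: "?J ! b \<noteq> n" if "b < length ?J" for b
    using that J n fin nth_mem[OF that] by fastforce
  have "wedge (map (H1_basis n) ?ps) ?J =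
      (\<Prod>a<length (map (H1_basis n) ?ps). (map (H1_basis n) ?ps ! a) {?J ! a})"
    by (rule wedge_eq_diag_prod[of ?ps]) (use card fin J_ne_n in \<open>auto simp: H1_basis_single split: if_splits\<close>)
  then have "psi (wedge (map (H1_basis n) ?ps)) J = (\<Prod>a<length ?ps. H1_basis n (?ps ! a) {?J ! a})"
    using fin by (simp add: psi_def)
  also have "\<dots> = (\<Prod>a<length ?ps. if ?J ! a = ?ps ! a then 1 else 0)"
    using card fin by (intro prod.cong) (auto simp: H1_basis_single J_ne_n)
  also have "\<dots> = (if J = I then 1 else 0)"
  proof (cases "J = I")
    case False
    then have "?J \<noteq> ?ps" using fin by (metis sorted_list_of_set_inject)
    then obtain a where "a < length ?ps" "?J ! a \<noteq> ?ps ! a"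
      using card fin nth_equalityI[of ?J ?ps] by auto
    with False show ?thesis by (auto intro!: prod_zero)
  qed simp
  finally show ?thesis .
qed

lemma sum_psi_wedge_H1_basis_apply:
  assumes n: "1 \<le> n" and J: "J \<in> {I. I \<subseteq> {1..n-1} \<and> card I = k}"
  shows "(\<Sum>I\<in>{I. I \<subseteq> {1..n-1} \<and> card I = k}.
    scl (c I) (psi (wedge (map (H1_basis n) (sorted_list_of_set I))))) J = c J"
proof -
  let ?II = "{I. I \<subseteq> {1..n-1} \<and> card I = k}"
  have "finite ?II" by (rule finite_subset[of _ "Pow {1..n-1}"]) auto
  have "(\<Sum>I\<in>?II. scl (c I) (psi (wedge (map (H1_basis n) (sorted_list_of_set I))))) J =
      (\<Sum>I\<in>?II. c I * psi (wedge (map (H1_basis n) (sorted_list_of_set I))) J)"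
    by (simp add: sum_apply scl_def)
  also have "\<dots> = (\<Sum>I\<in>?II. if I = J then c J else 0)"
    using J n by (intro sum.cong refl) (simp add: psi_wedge_H1_basis)
  also have "\<dots> = c J" using J \<open>finite ?II\<close> by simp
  finally show ?thesis .
qed

lemma H_support_without_n:
  assumes "v \<in> H n k" and "v S \<noteq> 0" and "n \<notin> S"
  shows "S \<in> {I. I \<subseteq> {1..n-1} \<and> card I = k}"
proof -
  from assms(1) have Vn: "v \<in> Vn n" and hom: "\<forall>T. v T \<noteq> 0 \<longrightarrow> card T = k"
    by (simp_all add: mem_H_iff)
  from Vn assms(2) have S: "S \<subseteq> {1..n}" unfolding Vn_def by blast
  have "S \<subseteq> {1..n-1}"
  proof
    fix t assume "t \<in> S"
    with S assms(3) have "1 \<le> t" "t \<le> n" "t \<noteq> n" by auto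
    then show "t \<in> {1..n-1}" by simp
  qed
  moreover from hom assms(2) have "card S = k" by blast
  ultimately show ?thesis by simp
qed

lemma H_eq_sum_psi_wedge_H1_basis:
  assumes n: "1 \<le> n" and v: "v \<in> H n k"
  shows "v = (\<Sum>I\<in>{I. I \<subseteq> {1..n-1} \<and> card I = k}.
    scl (v I) (psi (wedge (map (H1_basis n) (sorted_list_of_set I)))))" (is "v = ?x")
proof -
  have "psi (wedge (map (H1_basis n) (sorted_list_of_set I))) \<in> H n k" if "I \<subseteq> {1..n-1}" "card I = k" for I
    using that finite_subset[of I "{1..n-1}"] H1_basis_set_in_H1[of I n] by (intro psi_wedge_H1_in_H) auto
  then have x: "?x \<in> H n k"
    by (intro Kmod.subspace_sum[OF subspace_H] Kmod.subspace_scale[OF subspace_H]) auto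
  have d: "v - ?x \<in> H n k" by (rule Kmod.subspace_diff[OF subspace_H v x])
  have off: "(v - ?x) S = 0" if "n \<notin> S" for S
  proof (rule ccontr)
    assume nz: "(v - ?x) S \<noteq> 0"
    from d nz that have "S \<in> {I. I \<subseteq> {1..n-1} \<and> card I = k}" by (rule H_support_without_n)
    then have "?x S = v S" by (rule sum_psi_wedge_H1_basis_apply[OF n])
    with nz show False by simp
  qed
  have "E_op n (v - ?x) = 0" using d by (simp only: mem_H_iff)
  then have "v - ?x = 0" using off by (rule E_op_kernel_eq_0_if_zero_without_n[OF n])
  then show ?thesis by (simp only: right_minus_eq)
qed

lemma psi_ext_pow_H1_eq_H:
  assumes "1 \<le> n"
  shows "psi ` ext_pow k (H n 1) = H n k"
proof
  show "psi ` ext_pow k (H n 1) \<subseteq> H n k" by (rule psi_ext_pow_H1_subset)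
  show "H n k \<subseteq> psi ` ext_pow k (H n 1)"
  proof
    fix v assume v: "v \<in> H n k"
    let ?gens = "{wedge us | us. length us = k \<and> set us \<subseteq> H n 1}"
    have gen: "psi (wedge (map (H1_basis n) (sorted_list_of_set I))) \<in> psi ` ?gens"
      if "I \<in> {I. I \<subseteq> {1..n-1} \<and> card I = k}" for I
    proof (intro imageI CollectI exI conjI)
      show "wedge (map (H1_basis n) (sorted_list_of_set I)) = wedge (map (H1_basis n) (sorted_list_of_set I))" ..
      show "length (map (H1_basis n) (sorted_list_of_set I)) = k" using that by simp
      show "set (map (H1_basis n) (sorted_list_of_set I)) \<subseteq> H n 1" using that by (intro H1_basis_set_in_H1) simp
    qed
    have "v \<in> kspan (psi ` ?gens)"
      by (subst H_eq_sum_psi_wedge_H1_basis[OF assms v])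
        (intro Kmod.span_sum Kmod.span_scale Kmod.span_base gen)
    then show "v \<in> psi ` ext_pow k (H n 1)"
      unfolding ext_pow_def psi_hom.span_image .
  qed
qed

section \<open>Wedges of the vectors e_i\<close>

lemma e_single: "e i {t} = (if t = i then -1 else 0) + (if t = i + 1 then inverse q else 0)"
  by (simp add: e_def w_def bv_def)

lemma e_single_nonzero: "e i {t} \<noteq> 0 \<Longrightarrow> i \<le> t \<and> t \<le> i + 1"
  by (auto simp: e_single split: if_splits)

fun e_diag_prod :: "nat list \<Rightarrow> nat list \<Rightarrow> K" where
  "e_diag_prod [] [] = 1"
| "e_diag_prod (i # xs) (t # ts) = e i {t} * e_diag_prod xs ts"
| "e_diag_prod _ _ = 0"

lemma e_diag_prod_eq_prod:
  "length xs = length ts \<Longrightarrow> e_diag_prod xs ts = (\<Prod>a<length xs. e (xs ! a) {ts ! a})"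
  by (induction xs ts rule: list_induct2) (simp_all add: prod.lessThan_Suc_shift del: prod.lessThan_Suc)

lemma e_diag_prod_length: "length xs \<noteq> length ts \<Longrightarrow> e_diag_prod xs ts = 0"
  by (induction xs ts rule: e_diag_prod.induct) auto

lemma e_diag_prod_nonzero:
  "e_diag_prod xs ts \<noteq> 0 \<Longrightarrow>
    length xs = length ts \<and> (\<forall>a<length xs. xs ! a \<le> ts ! a \<and> ts ! a \<le> xs ! a + 1)"
proof (induction xs ts rule: e_diag_prod.induct)
  case (2 i xs t ts)
  then show ?case using e_single_nonzero[of i t] by (auto simp: nth_Cons' less_Suc_eq_0_disj)
qed auto

lemma e_diag_prod_self: "e_diag_prod xs xs = (-1) ^ length xs"
  by (induction xs) (simp_all add: e_single)

lemma e_diag_prod_Suc: "e_diag_prod xs (map Suc xs) = inverse q ^ length xs"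
  by (induction xs) (simp_all add: e_single)

lemma e_diag_prod_shift: "e_diag_prod (map (\<lambda>i. i + m) xs) (map (\<lambda>i. i + m) ts) = e_diag_prod xs ts"
  by (induction xs ts rule: e_diag_prod.induct) (simp_all add: e_single)

lemma e_diag_prod_append:
  "length xs = length ts \<Longrightarrow> e_diag_prod (xs @ xs') (ts @ ts') = e_diag_prod xs ts * e_diag_prod xs' ts'"
  by (induction xs ts rule: list_induct2) simp_all

text \<open>Unequal lengths on the two sides of a cut are harmless: the first mismatched pair straddles
  the cut, and e_i vanishes there.\<close>

lemma e_diag_prod_append_cut:
  assumes "\<forall>x\<in>set xs. x < m" "\<forall>x\<in>set xs'. m < x" "\<forall>t\<in>set ts. t \<le> m" "\<forall>t\<in>set ts'. m < t"
  shows "e_diag_prod (xs @ xs') (ts @ ts') = e_diag_prod xs ts * e_diag_prod xs' ts'"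
  using assms
proof (induction xs ts rule: e_diag_prod.induct)
  case ("3_1" i xs)
  then show ?case by (cases ts') (auto simp: e_single)
next
  case ("3_2" t ts)
  then show ?case by (cases xs') (auto simp: e_single)
qed simp_all

lemma wedge_map_e:
  assumes "sorted_wrt (<) xs"
  shows "wedge (map e xs) J = (if sorted_wrt (<) J then e_diag_prod xs J else 0)"
proof (cases "sorted_wrt (<) J \<and> length J = length xs")
  case True
  then have "wedge (map e xs) J = (\<Prod>a<length (map e xs). (map e xs ! a) {J ! a})"
    using assms by (intro wedge_eq_diag_prod[of xs]) (auto dest: e_single_nonzero)
  with True show ?thesis by (simp add: e_diag_prod_eq_prod)
next
  case False
  then show ?thesis by (auto simp: wedge_def e_diag_prod_length)
qed

definition psi_e :: "nat set \<Rightarrow> tvec" where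
  "psi_e I = psi (wedge (map e (sorted_list_of_set I)))"

lemma psi_e_apply:
  "psi_e I S = (if finite S then e_diag_prod (sorted_list_of_set I) (sorted_list_of_set S) else 0)"
  by (simp add: psi_e_def psi_def wedge_map_e)

lemma wedge_e_sorted_list_of_set:
  "wedge (map e (sorted_list_of_set I)) (sorted_list_of_set J) =
    e_diag_prod (sorted_list_of_set I) (sorted_list_of_set J)"
  by (simp add: wedge_map_e)

lemma sum_list_pointwise_le_eq:
  fixes xs ys :: "nat list"
  assumes "length xs = length ys" and "\<forall>a<length xs. xs ! a \<le> ys ! a" and "sum_list xs = sum_list ys"
  shows "xs = ys"
  using assms
proof (induction xs ys rule: list_induct2)
  case (Cons x xs y ys)
  then have "x \<le> y" and le: "\<forall>a<length xs. xs ! a \<le> ys ! a" by (auto simp: nth_Cons' All_less_Suc2)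
  moreover have "sum_list xs \<le> sum_list ys" using Cons.hyps le by (intro sum_list_mono2) auto
  ultimately show ?case using Cons by simp
qed simp

lemma e_diag_prod_nonzero_sum_less:
  assumes I: "finite I" and J: "finite J"
    and nz: "e_diag_prod (sorted_list_of_set J) (sorted_list_of_set I) \<noteq> 0" and "J \<noteq> I"
  shows "\<Sum>J < \<Sum>I"
proof -
  have sum: "sum_list (sorted_list_of_set A) = \<Sum>A" if "finite A" for A :: "nat set"
    using sum_list_distinct_conv_sum_set[of "sorted_list_of_set A" "\<lambda>x. x"] that by simp
  from e_diag_prod_nonzero[OF nz]
  have len: "length (sorted_list_of_set J) = length (sorted_list_of_set I)"
    and le: "\<forall>a<length (sorted_list_of_set J). sorted_list_of_set J ! a \<le> sorted_list_of_set I ! a"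
    by auto
  have "sum_list (sorted_list_of_set J) \<le> sum_list (sorted_list_of_set I)"
    using len le by (intro sum_list_mono2) auto
  moreover have "sorted_list_of_set J \<noteq> sorted_list_of_set I"
    using \<open>J \<noteq> I\<close> I J by (auto dest: sorted_list_of_set_inject)
  then have "sum_list (sorted_list_of_set J) \<noteq> sum_list (sorted_list_of_set I)"
    using sum_list_pointwise_le_eq[OF len le] by auto
  ultimately show ?thesis using I J by (simp add: sum)
qed

lemma wedge_e_self_nonzero: "wedge (map e (sorted_list_of_set I)) (sorted_list_of_set I) \<noteq> 0"
  by (simp add: wedge_e_sorted_list_of_set e_diag_prod_self)

lemma inj_on_wedge_e: "inj_on (\<lambda>I. wedge (map e (sorted_list_of_set I))) {I. finite I}"
proof (rule inj_onI)
  fix I J assume I: "I \<in> {I. finite I}" and J: "J \<in> {I. finite I}"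
    and eq: "wedge (map e (sorted_list_of_set I)) = wedge (map e (sorted_list_of_set J))"
  show "I = J"
  proof (rule ccontr)
    assume "I \<noteq> J"
    have "\<Sum>J < \<Sum>I"
      using I J \<open>I \<noteq> J\<close> wedge_e_self_nonzero[of I] fun_cong[OF eq, of "sorted_list_of_set I"]
      by (intro e_diag_prod_nonzero_sum_less) (auto simp: wedge_e_sorted_list_of_set)
    moreover have "\<Sum>I < \<Sum>J"
      using I J \<open>I \<noteq> J\<close> wedge_e_self_nonzero[of J] fun_cong[OF eq, of "sorted_list_of_set J"]
      by (intro e_diag_prod_nonzero_sum_less) (auto simp: wedge_e_sorted_list_of_set)
    ultimately show False by simp
  qed
qed

lemma independent_wedge_e: "\<not> kdependent ((\<lambda>I. wedge (map e (sorted_list_of_set I))) ` {I. finite I})"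
  (is "\<not> kdependent (?W ` _)")
proof
  assume "kdependent (?W ` {I. finite I})"
  then obtain t u where t: "finite t" "t \<subseteq> ?W ` {I. finite I}"
    and s0: "(\<Sum>v\<in>t. scl (u v) v) = 0" and "\<exists>v\<in>t. u v \<noteq> 0"
    unfolding Kmod.dependent_explicit by blast
  define P where "P I \<longleftrightarrow> finite I \<and> ?W I \<in> t \<and> u (?W I) \<noteq> 0" for I
  obtain v where v: "v \<in> t" "u v \<noteq> 0" using \<open>\<exists>v\<in>t. u v \<noteq> 0\<close> by blast
  with t(2) obtain I0 where "finite I0" "v = ?W I0" by blast
  with v have "P I0" by (simp add: P_def)
  (* Evaluate the relation at a set I of minimal sum carrying a nonzero coefficient:
     by triangularity, no other wedge of the relation is nonzero there. *)
  then obtain I where PI: "P I" and min: "\<And>J. P J \<Longrightarrow> \<Sum>I \<le> \<Sum>J"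
    using ex_has_least_nat[of P I0 "\<lambda>I. \<Sum>I"] by blast
  let ?f = "\<lambda>v. u v * v (sorted_list_of_set I)"
  have "sum ?f t = sum ?f {?W I}"
  proof (rule sum.mono_neutral_right[OF t(1)])
    show "{?W I} \<subseteq> t" using PI by (simp add: P_def)
    show "\<forall>v\<in>t - {?W I}. ?f v = 0"
    proof (rule ballI, rule ccontr)
      fix v assume v: "v \<in> t - {?W I}" and nz: "?f v \<noteq> 0"
      from v t(2) obtain J where J: "finite J" "v = ?W J" by blast
      with v nz have "P J" by (simp add: P_def)
      moreover have "\<Sum>J < \<Sum>I"
        using J v nz PI by (intro e_diag_prod_nonzero_sum_less) (auto simp: P_def wedge_e_sorted_list_of_set)
      ultimately show False using min by (meson leD)
    qed
  qed
  moreover have "sum ?f t = 0"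
    using fun_cong[OF s0, of "sorted_list_of_set I"] by (simp add: sum_apply scl_def)
  ultimately have "u (?W I) * ?W I (sorted_list_of_set I) = 0" by simp
  with PI show False by (simp add: P_def wedge_e_self_nonzero)
qed

section \<open>Factorisation of psi_e along runs\<close>

lemma sorted_list_of_set_Un_less:
  fixes A B :: "nat set"
  assumes "finite A" "finite B" "\<forall>x\<in>A. \<forall>y\<in>B. x < y"
  shows "sorted_list_of_set (A \<union> B) = sorted_list_of_set A @ sorted_list_of_set B"
proof -
  have "sorted_wrt (<) (sorted_list_of_set A @ sorted_list_of_set B)"
    using assms by (simp add: sorted_wrt_append)
  with assms show ?thesis by (metis set_append set_sorted_list_of_set sorted_list_of_set_set_strict)
qed

lemma sorted_list_of_set_image_add:
  fixes A :: "nat set"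
  assumes "finite A"
  shows "sorted_list_of_set ((\<lambda>i. i + m) ` A) = map (\<lambda>i. i + m) (sorted_list_of_set A)"
proof -
  have "sorted_wrt (<) (map (\<lambda>i. i + m) (sorted_list_of_set A))"
    by (simp add: sorted_wrt_map)
  with assms show ?thesis by (metis list.set_map set_sorted_list_of_set sorted_list_of_set_set_strict)
qed

lemma psi_e_empty: "psi_e {} = bv {}"
proof
  fix S
  show "psi_e {} S = bv {} S"
  proof (cases "finite S \<and> S \<noteq> {}")
    case True
    then have "length [] \<noteq> length (sorted_list_of_set S)" by simp
    with True show ?thesis by (simp add: psi_e_apply bv_def e_diag_prod_length)
  qed (auto simp: psi_e_apply bv_def)
qed

lemma psi_e_Un:
  assumes I: "finite I" "finite I'" and cut: "\<forall>x\<in>I. x < m" "\<forall>x\<in>I'. m < x"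
  shows "psi_e (I \<union> I') S = psi_e I {i\<in>S. i \<le> m} * psi_e I' {i\<in>S. m < i}"
proof (cases "finite S")
  case True
  have "S = {i\<in>S. i \<le> m} \<union> {i\<in>S. m < i}" by auto
  then have "sorted_list_of_set S = sorted_list_of_set {i\<in>S. i \<le> m} @ sorted_list_of_set {i\<in>S. m < i}"
    using True sorted_list_of_set_Un_less[of "{i\<in>S. i \<le> m}" "{i\<in>S. m < i}"] by auto
  moreover have "sorted_list_of_set (I \<union> I') = sorted_list_of_set I @ sorted_list_of_set I'"
    using I cut by (intro sorted_list_of_set_Un_less) force+
  ultimately show ?thesis
    using True I cut by (simp add: psi_e_apply e_diag_prod_append_cut[where m = m])
next
  case False
  have "S = {i\<in>S. i \<le> m} \<union> {i\<in>S. m < i}" by auto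
  with False have "infinite {i\<in>S. i \<le> m} \<or> infinite {i\<in>S. m < i}" by (metis finite_UnI)
  with False show ?thesis by (auto simp: psi_e_apply)
qed

lemma psi_e_shift:
  assumes I: "finite I" and S: "\<forall>x\<in>S. m < x"
  shows "psi_e ((\<lambda>i. i + m) ` I) S = psi_e I ((\<lambda>i. i - m) ` S)"
proof -
  have S_eq: "S = (\<lambda>i. i + m) ` (\<lambda>i. i - m) ` S"
    using S by (force simp: image_image)
  show ?thesis
  proof (cases "finite S")
    case True
    then have "sorted_list_of_set S = map (\<lambda>i. i + m) (sorted_list_of_set ((\<lambda>i. i - m) ` S))"
      by (subst S_eq) (simp add: sorted_list_of_set_image_add)
    with True I show ?thesis by (simp add: psi_e_apply sorted_list_of_set_image_add e_diag_prod_shift)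
  next
    case False
    then have "infinite ((\<lambda>i. i - m) ` S)" using S_eq by (metis finite_imageI)
    with False show ?thesis by (simp add: psi_e_apply)
  qed
qed

lemma E_op_block_remove:
  assumes j: "j \<in> {1..b}"
  shows "E_op b (bv {1..b}) ({1..b} - {j}) = (-1) ^ (j - 1) * inverse q ^ (b - j)"
proof -
  have "{1..b} - ({1..b} - {j}) = {j}" and "insert j ({1..b} - {j}) = {1..b}"
    and "{i\<in>{1..b} - {j}. i < j} = {1..<j}"
    using j by auto
  then show ?thesis by (simp add: E_op_def bv_def)
qed

lemma E_op_block_other:
  assumes "\<forall>j\<in>{1..b}. S \<noteq> {1..b} - {j}"
  shows "E_op b (bv {1..b}) S = 0"
proof -
  have "insert j S \<noteq> {1..b}" if "j \<in> {1..b} - S" for j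
    using assms that by (metis Diff_insert_absorb DiffD1 DiffD2)
  then show ?thesis by (simp add: E_op_def bv_def)
qed

lemma sorted_list_of_set_interval_remove:
  assumes "j \<in> {1..b}"
  shows "sorted_list_of_set ({1..b} - {j}) = [1..<j] @ map Suc [j..<b]"
proof -
  have "set ([1..<j] @ map Suc [j..<b]) = {1..<j} \<union> {Suc j..<Suc b}"
    by (simp add: image_Suc_atLeastLessThan)
  also have "\<dots> = {1..b} - {j}" using assms by auto
  finally have "{1..b} - {j} = set ([1..<j] @ map Suc [j..<b])" ..
  moreover have "sorted_wrt (<) ([1..<j] @ map Suc [j..<b])"
    by (auto simp: sorted_wrt_append sorted_wrt_map)
  ultimately show ?thesis by (metis sorted_list_of_set_set_strict)
qed

lemma psi_e_interval_remove:
  assumes j: "j \<in> {1..b}"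
  shows "psi_e {1..b-1} ({1..b} - {j}) = (-1) ^ (j - 1) * inverse q ^ (b - j)"
proof -
  have "sorted_list_of_set {1..b-1} = [1..<j] @ [j..<b]"
    using j upt_add_eq_append[of 1 j "b - j"] by (auto simp: atLeastLessThanSuc_atLeastAtMost[symmetric])
  moreover have "sorted_list_of_set ({1..b} - {j}) = [1..<j] @ map Suc [j..<b]"
    by (rule sorted_list_of_set_interval_remove[OF j])
  ultimately show ?thesis
    using j by (simp add: psi_e_apply e_diag_prod_append e_diag_prod_self e_diag_prod_Suc)
qed

lemma psi_e_interval_nonzero:
  assumes nz: "psi_e {1..b-1} S \<noteq> 0" and b: "1 \<le> b"
  shows "\<exists>j\<in>{1..b}. S = {1..b} - {j}"
proof -
  have S: "finite S" using nz by (auto simp: psi_e_apply split: if_splits)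
  have "sorted_list_of_set {1..b-1} = [1..<b]"
    using b by (metis One_nat_def Suc_pred' atLeastLessThanSuc_atLeastAtMost less_eq_Suc_le sorted_list_of_set_range)
  with nz S have "e_diag_prod [1..<b] (sorted_list_of_set S) \<noteq> 0" by (simp add: psi_e_apply)
  from e_diag_prod_nonzero[OF this] S
  have card: "card S = b - 1" and near: "\<forall>a<b - 1. a + 1 \<le> sorted_list_of_set S ! a \<and> sorted_list_of_set S ! a \<le> a + 2"
    by auto
  have sub: "S \<subseteq> {1..b}"
  proof
    fix t assume "t \<in> S"
    then obtain a where "a < card S" "sorted_list_of_set S ! a = t"
      using S by (metis in_set_conv_nth length_sorted_list_of_set set_sorted_list_of_set)
    with card near show "t \<in> {1..b}" by force
  qed
  with card b S have "card ({1..b} - S) = 1" by (simp add: card_Diff_subset)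
  then obtain j where "{1..b} - S = {j}" by (rule card_1_singletonE)
  with sub show ?thesis by blast
qed

lemma psi_e_interval: "1 \<le> b \<Longrightarrow> psi_e {1..b-1} = E_op b (bv {1..b})"
  by (rule ext) (metis E_op_block_other E_op_block_remove psi_e_interval_nonzero psi_e_interval_remove)

lemma tensor_bv_empty: "tensor a (bv {}) (bv {}) = bv {}"
proof
  fix S
  show "tensor a (bv {}) (bv {}) S = bv {} S"
  proof (cases "S = {}")
    case False
    then obtain x where "x \<in> S" by blast
    then have "{i\<in>S. i \<le> a} \<noteq> {} \<or> (\<lambda>i. i - a) ` {i\<in>S. a < i} \<noteq> {}"
      by (cases "x \<le> a") (auto simp: not_le)
    with False show ?thesis by (auto simp: tensor_def bv_def)
  qed (simp add: tensor_def bv_def)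
qed

text \<open>The index set of a string a # b # r: a run of b - 1 consecutive elements starting at a + 1,
  followed by the index set of r shifted past the block of length b.\<close>

definition str_block :: "nat \<Rightarrow> nat \<Rightarrow> nat set \<Rightarrow> nat set" where
  "str_block a b J = (\<lambda>i. i + a) ` ({1..b-1} \<union> (\<lambda>i. i + b) ` J)"

lemma psi_e_str_block:
  assumes J: "finite J" "\<forall>x\<in>J. 0 < x" and b: "1 \<le> b"
  shows "psi_e (str_block a b J) = tensor a (bv {}) (tensor b (E_op b (bv {1..b})) (psi_e J))"
proof
  fix S
  let ?I = "{1..b-1} \<union> (\<lambda>i. i + b) ` J"
  let ?S = "(\<lambda>i. i - a) ` {i\<in>S. a < i}"
  have "psi_e (str_block a b J) S = psi_e ({} \<union> (\<lambda>i. i + a) ` ?I) S"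
    by (simp add: str_block_def)
  also have "\<dots> = psi_e {} {i\<in>S. i \<le> a} * psi_e ((\<lambda>i. i + a) ` ?I) {i\<in>S. a < i}"
    using J b by (intro psi_e_Un) auto
  also have "psi_e ((\<lambda>i. i + a) ` ?I) {i\<in>S. a < i} = psi_e ?I ?S"
    using J by (intro psi_e_shift) auto
  also have "psi_e ?I ?S = psi_e {1..b-1} {i\<in>?S. i \<le> b} * psi_e ((\<lambda>i. i + b) ` J) {i\<in>?S. b < i}"
    using J by (intro psi_e_Un) auto
  also have "psi_e ((\<lambda>i. i + b) ` J) {i\<in>?S. b < i} = psi_e J ((\<lambda>i. i - b) ` {i\<in>?S. b < i})"
    using J by (intro psi_e_shift) auto
  finally show "psi_e (str_block a b J) S = tensor a (bv {}) (tensor b (E_op b (bv {1..b})) (psi_e J)) S"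
    unfolding psi_e_interval[OF b] psi_e_empty by (simp add: tensor_def)
qed

lemma card_str_block:
  assumes "finite J" "\<forall>x\<in>J. 0 < x"
  shows "card (str_block a b J) = (b - 1) + card J"
proof -
  have "card (str_block a b J) = card ({1..b-1} \<union> (\<lambda>i. i + b) ` J)"
    unfolding str_block_def by (rule card_image) (simp add: inj_on_def)
  also have "\<dots> = card {1..b-1} + card ((\<lambda>i. i + b) ` J)"
    using assms by (intro card_Un_disjoint) auto
  also have "card ((\<lambda>i. i + b) ` J) = card J" by (rule card_image) (simp add: inj_on_def)
  finally show ?thesis by simp
qed

section \<open>Strings\<close>

fun wf_str :: "nat list \<Rightarrow> bool" where
  "wf_str [] = False"
| "wf_str [a] = True"
| "wf_str (a # b # r) = (2 \<le> b \<and> wf_str r)"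

fun str_k :: "nat list \<Rightarrow> nat" where
  "str_k (a # b # r) = (b - 1) + str_k r"
| "str_k _ = 0"

fun str_set :: "nat list \<Rightarrow> nat set" where
  "str_set (a # b # r) = str_block a b (str_set r)"
| "str_set _ = {}"

lemma wf_str_iff: "wf_str s \<longleftrightarrow> odd (length s) \<and> (\<forall>i<length s. odd i \<longrightarrow> 2 \<le> s ! i)"
  by (induction s rule: wf_str.induct) (auto simp: All_less_Suc2)

lemma str_k_eq_sum: "str_k s = (\<Sum>i<length s. if odd i then s ! i - 1 else 0)"
  by (induction s rule: str_k.induct) (simp_all add: sum.lessThan_Suc_shift cong: if_cong del: sum.lessThan_Suc)

lemma mem_S_str_iff: "s \<in> S_str n k \<longleftrightarrow> wf_str s \<and> str_k s = k \<and> sum_list s = n"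
proof -
  have "(\<Sum>i\<in>{i. i < length s \<and> odd i}. s ! i - 1) = (\<Sum>i\<in>{i\<in>{..<length s}. odd i}. s ! i - 1)"
    by (rule sum.cong) auto
  then have "(\<Sum>i\<in>{i. i < length s \<and> odd i}. s ! i - 1) = str_k s"
    by (simp only: sum.inter_filter[OF finite_lessThan] str_k_eq_sum)
  then show ?thesis by (auto simp: S_str_def wf_str_iff)
qed

lemma str_set_subset: "str_set s \<subseteq> {1..sum_list s - 1}"
  by (induction s rule: str_set.induct) (auto simp: str_block_def subset_iff)

lemma finite_str_set: "finite (str_set s)"
  using str_set_subset finite_subset by blast

lemma str_set_pos: "\<forall>x\<in>str_set s. 0 < x"
  using str_set_subset by fastforce

lemma card_str_set: "card (str_set s) = str_k s"
  by (induction s rule: str_set.induct) (simp_all add: card_str_block finite_str_set str_set_pos)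

lemma phi_eq_psi_e_str_set: "wf_str s \<Longrightarrow> phi_aux True s = psi_e (str_set s)"
proof (induction s rule: wf_str.induct)
  case (2 a)
  then show ?case by (simp add: tensor_bv_empty psi_e_empty)
next
  case (3 a b r)
  then have "psi_e (str_set (a # b # r)) = tensor a (bv {}) (tensor b (E_op b (bv {1..b})) (psi_e (str_set r)))"
    unfolding str_set.simps by (intro psi_e_str_block finite_str_set str_set_pos) simp
  with 3 show ?case by simp
qed simp

lemma mem_str_block: "x \<in> str_block a b J \<longleftrightarrow> (\<exists>y\<in>{1..b-1}. x = y + a) \<or> (\<exists>j\<in>J. x = j + b + a)"
  by (auto simp: str_block_def image_iff)

lemma str_block_first_run:
  assumes I: "I \<subseteq> {1..m-1}" and \<mu>: "\<mu> \<in> I" "\<forall>x\<in>I. \<mu> \<le> x"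
    and r: "\<mu> + r \<notin> I" "\<forall>r'<r. \<mu> + r' \<in> I"
  shows "I = str_block (\<mu> - 1) (r + 1) ((\<lambda>i. i - (\<mu> + r)) ` {i\<in>I. \<mu> + r < i})"
proof -
  have "1 \<le> \<mu>" using I \<mu> by auto
  have run: "\<mu> - 1 < x \<and> x < \<mu> + r \<longleftrightarrow> (\<exists>y\<in>{1..r}. x = y + (\<mu> - 1))" for x
  proof
    assume "\<mu> - 1 < x \<and> x < \<mu> + r"
    then show "\<exists>y\<in>{1..r}. x = y + (\<mu> - 1)" by (intro bexI[of _ "x - (\<mu> - 1)"]) auto
  qed (use \<open>1 \<le> \<mu>\<close> in auto)
  have tail: "x \<in> I \<and> \<mu> + r < x \<longleftrightarrow>
      (\<exists>j\<in>(\<lambda>i. i - (\<mu> + r)) ` {i\<in>I. \<mu> + r < i}. x = j + (r + 1) + (\<mu> - 1))" for x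
    using \<open>1 \<le> \<mu>\<close> by force
  have split: "x \<in> I \<longleftrightarrow> (\<mu> - 1 < x \<and> x < \<mu> + r) \<or> (x \<in> I \<and> \<mu> + r < x)" for x
  proof
    assume "x \<in> I"
    with \<mu> r(1) have "\<mu> \<le> x" "x \<noteq> \<mu> + r" by auto
    with \<open>x \<in> I\<close> \<open>1 \<le> \<mu>\<close> show "(\<mu> - 1 < x \<and> x < \<mu> + r) \<or> (x \<in> I \<and> \<mu> + r < x)" by auto
  next
    assume "(\<mu> - 1 < x \<and> x < \<mu> + r) \<or> (x \<in> I \<and> \<mu> + r < x)"
    then show "x \<in> I"
    proof
      assume "\<mu> - 1 < x \<and> x < \<mu> + r"
      then have "x - \<mu> < r" "x = \<mu> + (x - \<mu>)" using \<open>1 \<le> \<mu>\<close> by auto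
      with r(2) show "x \<in> I" by metis
    qed simp
  qed
  show ?thesis
  proof (rule Set.set_eqI)
    fix x
    have "x \<in> I \<longleftrightarrow> (\<exists>y\<in>{1..r}. x = y + (\<mu> - 1)) \<or>
        (\<exists>j\<in>(\<lambda>i. i - (\<mu> + r)) ` {i\<in>I. \<mu> + r < i}. x = j + (r + 1) + (\<mu> - 1))"
      using split[of x] run[of x] tail[of x] by blast
    then show "x \<in> I \<longleftrightarrow> x \<in> str_block (\<mu> - 1) (r + 1) ((\<lambda>i. i - (\<mu> + r)) ` {i\<in>I. \<mu> + r < i})"
      by (simp add: mem_str_block)
  qed
qed

lemma str_set_surj:
  "finite I \<Longrightarrow> I \<subseteq> {1..m-1} \<Longrightarrow> \<exists>s. wf_str s \<and> sum_list s = m \<and> str_set s = I"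
proof (induction "card I" arbitrary: I m rule: less_induct)
  case less
  show ?case
  proof (cases "I = {}")
    case True
    then show ?thesis by (intro exI[of _ "[m]"]) simp
  next
    case False
    define \<mu> where "\<mu> = Min I"
    have \<mu>: "\<mu> \<in> I" "\<forall>x\<in>I. \<mu> \<le> x" using less.prems False by (simp_all add: \<mu>_def)
    have "\<exists>r. \<mu> + r \<notin> I"
      using less.prems(1) by (metis add.commute finite_nat_set_iff_bounded_le le_add2 not_less_eq_eq)
    define r where "r = (LEAST r. \<mu> + r \<notin> I)"
    have r: "\<mu> + r \<notin> I" "\<forall>r'<r. \<mu> + r' \<in> I"
      using LeastI_ex[OF \<open>\<exists>r. \<mu> + r \<notin> I\<close>] not_less_Least by (auto simp: r_def)
    have "r \<noteq> 0" using r \<mu> by (metis add_0_right)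
    define J where "J = (\<lambda>i. i - (\<mu> + r)) ` {i\<in>I. \<mu> + r < i}"
    have I_eq: "I = str_block (\<mu> - 1) (r + 1) J"
      unfolding J_def using less.prems(2) \<mu> r by (rule str_block_first_run)
    have "r - 1 < r" using \<open>r \<noteq> 0\<close> by simp
    with r(2) have "\<mu> + (r - 1) \<in> I" by blast
    then have m: "\<mu> + r \<le> m" using less.prems(2) \<open>r \<noteq> 0\<close> by force
    have "card J \<le> card {i\<in>I. \<mu> + r < i}" unfolding J_def by (rule card_image_le) (simp add: less.prems)
    also have "\<dots> < card I" using less.prems(1) \<mu> by (intro psubset_card_mono) auto
    finally have "card J < card I" .
    moreover have "finite J" using less.prems(1) by (simp add: J_def)
    moreover have "J \<subseteq> {1..(m - (\<mu> + r)) - 1}" using less.prems(2) by (force simp: J_def)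
    ultimately obtain s where s: "wf_str s" "sum_list s = m - (\<mu> + r)" "str_set s = J"
      using less.hyps by blast
    have "wf_str ((\<mu> - 1) # (r + 1) # s)" using s \<open>r \<noteq> 0\<close> by simp
    moreover have "sum_list ((\<mu> - 1) # (r + 1) # s) = m" using s m \<mu> less.prems(2) by force
    moreover have "str_set ((\<mu> - 1) # (r + 1) # s) = I" using s I_eq by simp
    ultimately show ?thesis by blast
  qed
qed

lemma psi_e_image_eq_phi_image: "psi_e ` {I. I \<subseteq> {1..n-1} \<and> card I = k} = phi ` S_str n k"
proof (intro equalityI subsetI)
  fix x assume "x \<in> psi_e ` {I. I \<subseteq> {1..n-1} \<and> card I = k}"
  then obtain I where I: "I \<subseteq> {1..n-1}" "card I = k" and x: "x = psi_e I" by blast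
  moreover have "finite I" using I finite_subset by blast
  ultimately obtain s where s: "wf_str s" "sum_list s = n" "str_set s = I"
    using str_set_surj by blast
  moreover have "str_k s = k" using s(3) I(2) by (metis card_str_set)
  ultimately have "s \<in> S_str n k" by (simp add: mem_S_str_iff)
  moreover have "x = phi s" using s x by (simp add: phi_def phi_eq_psi_e_str_set)
  ultimately show "x \<in> phi ` S_str n k" by blast
next
  fix x assume "x \<in> phi ` S_str n k"
  then obtain s where s: "wf_str s" "str_k s = k" "sum_list s = n" and x: "x = phi s"
    by (auto simp: mem_S_str_iff)
  then have "str_set s \<in> {I. I \<subseteq> {1..n-1} \<and> card I = k}"
    using str_set_subset[of s] by (simp add: card_str_set)
  moreover have "x = psi_e (str_set s)" using s x by (simp add: phi_def phi_eq_psi_e_str_set)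
  ultimately show "x \<in> psi_e ` {I. I \<subseteq> {1..n-1} \<and> card I = k}" by blast
qed

theorem proposition2p7:
  fixes n k :: nat
  assumes "2 \<le> n" and "1 \<le> k" and "k \<le> n - 1"
  shows "psi ` ext_pow k (H n 1) = H n k
    \<and> inj_on psi (ext_pow k (H n 1))
    \<and> inj_on (\<lambda>I. wedge (map e (sorted_list_of_set I))) {I. I \<subseteq> {1..n-1} \<and> card I = k}
         \<and> \<not> kdependent ((\<lambda>I. wedge (map e (sorted_list_of_set I))) ` {I. I \<subseteq> {1..n-1} \<and> card I = k})
    \<and> (\<lambda>I. psi (wedge (map e (sorted_list_of_set I)))) ` {I. I \<subseteq> {1..n-1} \<and> card I = k}
         = phi ` S_str n k"
proof (intro conjI)
  have fin: "{I. I \<subseteq> {1..n-1} \<and> card I = k} \<subseteq> {I. finite I}"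
    using finite_subset by auto
  show "psi ` ext_pow k (H n 1) = H n k"
    using assms(1) by (intro psi_ext_pow_H1_eq_H) simp
  show "inj_on psi (ext_pow k (H n 1))"
    by (rule inj_on_psi_ext_pow)
  show "inj_on (\<lambda>I. wedge (map e (sorted_list_of_set I))) {I. I \<subseteq> {1..n-1} \<and> card I = k}"
    using inj_on_wedge_e fin by (rule inj_on_subset)
  show "\<not> kdependent ((\<lambda>I. wedge (map e (sorted_list_of_set I))) ` {I. I \<subseteq> {1..n-1} \<and> card I = k})"
    using independent_wedge_e image_mono[OF fin] by (rule Kmod.independent_mono)
  show "(\<lambda>I. psi (wedge (map e (sorted_list_of_set I)))) ` {I. I \<subseteq> {1..n-1} \<and> card I = k}
      = phi ` S_str n k"
    using psi_e_image_eq_phi_image unfolding psi_e_def .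
qed
end
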